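(* Let $\mathcal{X}\subset\mathbb{R}^p$, $\mathcal{Y}\subset\mathbb{R}^q$ be closed convex sets, $\mathcal{Z}=\mathcal{X}\times\mathcal{Y}$, $f:\mathcal{X}\times\mathcal{Y}\to\mathbb{R}$ continuous, and $F(\mathbf{x},\mathbf{y})=\partial_xf(\mathbf{x},\mathbf{y})\times\partial_y[-f(\mathbf{x},\mathbf{y})]$, assumed $\rho$-weakly monotone on $\mathcal{Z}$ for some $\rho>0$. Let $0<\gamma<\rho^{-1}$, $\mathbf{w}=(\mathbf{u},\mathbf{v})\in\mathcal{Z}$, $F^\gamma_{\mathbf{w}}(\mathbf{z}):=F(\mathbf{z})+\gamma^{-1}(\mathbf{z}-\mathbf{w})$, and let $\bar{\mathbf{w}}=(\bar{\mathbf{u}},\bar{\mathbf{v}})$ be the solution of $\mathrm{SVI}(F^\gamma_{\mathbf{w}},\mathcal{Z})$. Then $$\mathrm{dist}\big(0,\partial(f(\bar{\mathbf{u}},\bar{\mathbf{v}})+1_{\mathcal{Z}}(\bar{\mathbf{u}},\bar{\mathbf{v}}))\big)\le\|\mathbf{w}-\bar{\mathbf{w}}\|/\gamma.$$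
   Context: $\partial$ denotes the Fréchet subdifferential: $\partial h(\mathbf{x})=\{\boldsymbol{\zeta}: h(\mathbf{x}')\ge h(\mathbf{x})+\boldsymbol{\zeta}^\top(\mathbf{x}'-\mathbf{x})+o(\|\mathbf{x}'-\mathbf{x}\|),\ \mathbf{x}'\to\mathbf{x}\}$, and $\partial_x,\partial_y$ are partial Fréchet subdifferentials. $1_{\mathcal{S}}$ is the indicator function of a set $\mathcal{S}$ ($0$ on $\mathcal{S}$, $+\infty$ outside). By definition $\partial(f(\mathbf{x},\mathbf{y})+1_{\mathcal{Z}}(\mathbf{x},\mathbf{y})):=\partial_x[f(\mathbf{x},\mathbf{y})+1_{\mathcal{X}}(\mathbf{x})]\times\partial_y[-f(\mathbf{x},\mathbf{y})+1_{\mathcal{Y}}(\mathbf{y})]$, and $\mathrm{dist}(\mathbf{0},\mathcal{S})$ is the Euclidean distance from $\mathbf{0}$ to $\mathcal{S}$. $F$ is $\rho$-weakly monotone if $\langle\boldsymbol{\xi}-\boldsymbol{\xi}',\mathbf{z}-\mathbf{z}'\rangle\ge-\rho\|\mathbf{z}-\mathbf{z}'\|^2$ for all $\mathbf{z},\mathbf{z}'$ and $\boldsymbol{\xi}\in F(\mathbf{z}),\boldsymbol{\xi}'\in F(\mathbf{z}')$. $\mathrm{SVI}(G,\mathcal{Z})$ asks for $\mathbf{z}^*\in\mathcal{Z}$ with some $\boldsymbol{\xi}^*\in G(\mathbf{z}^* )$ satisfying $\langle\boldsymbol{\xi}^*,\mathbf{z}-\mathbf{z}^*\rangle\ge0$ for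 all $\mathbf{z}\in\mathcal{Z}$; since $F^\gamma_{\mathbf{w}}$ is $(\gamma^{-1}-\rho)$-strongly monotone its solution is unique. *)

theory Defs
  imports "HOL-Analysis.Analysis"
begin

text \<open>Frechet subdifferential of h + 1_S at x (h real-valued on S, the indicator
  making the function +infinity off S): empty if x is not in S; otherwise the
  zeta with h x' \<ge> h x + zeta\<bullet>(x'-x) + o(norm(x'-x)) as x' \<rightarrow> x within S
  (outside S the inequality is trivial since the left side is +infinity).\<close>
definition frechet_subdiff_on :: "'a::real_inner set \<Rightarrow> ('a \<Rightarrow> real) \<Rightarrow> 'a \<Rightarrow> 'a set" where
  "frechet_subdiff_on S h x = {\<zeta>. x \<in> S \<and>
     (\<forall>e>0. \<exists>d>0. \<forall>x'\<in>S. norm (x' - x) < d \<longrightarrow>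
        h x + \<zeta> \<bullet> (x' - x) - e * norm (x' - x) \<le> h x')}"

text \<open>The saddle subdifferential
  d(f + 1_Z)(x,y) := d_x[f(x,y) + 1_X(x)] \<times> d_y[-f(x,y) + 1_Y(y)].
  The operator F = d_x f \<times> d_y[-f] of the paper, for f defined only on X \<times> Y,
  is this same set (the partial subdifferentials are taken relative to X resp. Y).\<close>
definition saddle_subdiff ::
  "'a::real_inner set \<Rightarrow> 'b::real_inner set \<Rightarrow> ('a \<Rightarrow> 'b \<Rightarrow> real) \<Rightarrow> 'a \<times> 'b \<Rightarrow> ('a \<times> 'b) set" where
  "saddle_subdiff X Y f z =
     frechet_subdiff_on X (\<lambda>x'. f x' (snd z)) (fst z) \<times>
     frechet_subdiff_on Y (\<lambda>y'. - f (fst z) y') (snd z)"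

definition weakly_monotone_on :: "'a::real_inner set \<Rightarrow> ('a \<Rightarrow> 'a set) \<Rightarrow> real \<Rightarrow> bool" where
  "weakly_monotone_on Z F \<rho> \<longleftrightarrow>
     (\<forall>z\<in>Z. \<forall>z'\<in>Z. \<forall>\<xi>\<in>F z. \<forall>\<xi>'\<in>F z'.
        (\<xi> - \<xi>') \<bullet> (z - z') \<ge> - \<rho> * (norm (z - z'))\<^sup>2)"

definition is_SVI_solution :: "('a::real_inner \<Rightarrow> 'a set) \<Rightarrow> 'a set \<Rightarrow> 'a \<Rightarrow> bool" where
  "is_SVI_solution G Z zs \<longleftrightarrow> zs \<in> Z \<and> (\<exists>\<xi>\<in>G zs. \<forall>z\<in>Z. \<xi> \<bullet> (z - zs) \<ge> 0)"

definition prox_op :: "('a::real_normed_vector \<Rightarrow> 'a set) \<Rightarrow> real \<Rightarrow> 'a \<Rightarrow> 'a \<Rightarrow> 'a set" where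
  "prox_op F \<gamma> w z = (\<lambda>\<xi>. \<xi> + (1 / \<gamma>) *\<^sub>R (z - w)) ` F z"

end

theory Submission
  imports Defs
begin

text \<open>For some \<open>\<xi> \<in> F(wbar)\<close> the SVI condition says that \<open>\<xi> + (wbar - w)/\<gamma>\<close> lies in
  the negative normal cone of \<open>Z\<close> at \<open>wbar\<close>. Subtracting a normal-cone vector from a
  Frechet subgradient relative to \<open>Z\<close> leaves a subgradient, so \<open>(w - wbar)/\<gamma>\<close> belongs to
  \<open>\<partial>(f + 1\<^sub>Z)(wbar)\<close>, and its norm is the claimed bound. Closedness, convexity, continuity
  and weak monotonicity only serve to make \<open>wbar\<close> exist and be unique, which is assumed.\<close>

lemma frechet_subdiff_on_dominated:
  assumes "\<xi> \<in> frechet_subdiff_on S h x"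
    and "\<And>x'. x' \<in> S \<Longrightarrow> \<zeta> \<bullet> (x' - x) \<le> \<xi> \<bullet> (x' - x)"
  shows "\<zeta> \<in> frechet_subdiff_on S h x"
  unfolding frechet_subdiff_on_def
proof (intro CollectI conjI allI impI)
  show "x \<in> S" using assms(1) by (simp add: frechet_subdiff_on_def)
next
  fix e :: real assume "e > 0"
  then obtain d where "d > 0" and d: "\<forall>x'\<in>S. norm (x' - x) < d \<longrightarrow>
      h x + \<xi> \<bullet> (x' - x) - e * norm (x' - x) \<le> h x'"
    using assms(1) unfolding frechet_subdiff_on_def by blast
  have "h x + \<zeta> \<bullet> (x' - x) - e * norm (x' - x) \<le> h x'"
    if "x' \<in> S" "norm (x' - x) < d" for x'
    using d assms(2)[of x'] that by force
  with \<open>d > 0\<close> show "\<exists>d>0. \<forall>x'\<in>S. norm (x' - x) < d \<longrightarrow>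
      h x + \<zeta> \<bullet> (x' - x) - e * norm (x' - x) \<le> h x'" by blast
qed

lemma saddle_subdiff_dominated:
  assumes "\<xi> \<in> saddle_subdiff X Y f z"
    and "\<And>z'. z' \<in> X \<times> Y \<Longrightarrow> \<zeta> \<bullet> (z' - z) \<le> \<xi> \<bullet> (z' - z)"
  shows "\<zeta> \<in> saddle_subdiff X Y f z"
proof -
  obtain x y where z: "z = (x, y)" by fastforce
  obtain a b where \<xi>: "\<xi> = (a, b)" by fastforce
  obtain c d where \<zeta>: "\<zeta> = (c, d)" by fastforce
  have a: "a \<in> frechet_subdiff_on X (\<lambda>x'. f x' y) x"
    and b: "b \<in> frechet_subdiff_on Y (\<lambda>y'. - f x y') y"
    using assms(1) by (simp_all add: saddle_subdiff_def z \<xi>)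
  then have "x \<in> X" "y \<in> Y" by (simp_all add: frechet_subdiff_on_def)
  have "c \<in> frechet_subdiff_on X (\<lambda>x'. f x' y) x"
  proof (rule frechet_subdiff_on_dominated[OF a])
    fix x' assume "x' \<in> X"
    with assms(2)[of "(x', y)"] \<open>y \<in> Y\<close> show "c \<bullet> (x' - x) \<le> a \<bullet> (x' - x)"
      by (simp add: z \<xi> \<zeta> inner_Pair)
  qed
  moreover have "d \<in> frechet_subdiff_on Y (\<lambda>y'. - f x y') y"
  proof (rule frechet_subdiff_on_dominated[OF b])
    fix y' assume "y' \<in> Y"
    with assms(2)[of "(x, y')"] \<open>x \<in> X\<close> show "d \<bullet> (y' - y) \<le> b \<bullet> (y' - y)"
      by (simp add: z \<xi> \<zeta> inner_Pair)
  qed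
  ultimately show ?thesis by (simp add: saddle_subdiff_def z \<zeta>)
qed

lemma SVI_solution_prox_op_dominates_residual:
  assumes "is_SVI_solution (prox_op F \<gamma> w) Z wbar"
  obtains \<xi> where "\<xi> \<in> F wbar"
    and "\<And>z. z \<in> Z \<Longrightarrow> ((1 / \<gamma>) *\<^sub>R (w - wbar)) \<bullet> (z - wbar) \<le> \<xi> \<bullet> (z - wbar)"
proof -
  obtain \<xi> where "\<xi> \<in> F wbar"
    and svi: "\<And>z. z \<in> Z \<Longrightarrow> (\<xi> + (1 / \<gamma>) *\<^sub>R (wbar - w)) \<bullet> (z - wbar) \<ge> 0"
    using assms unfolding is_SVI_solution_def prox_op_def by blast
  have "(1 / \<gamma>) *\<^sub>R (w - wbar) = \<xi> - (\<xi> + (1 / \<gamma>) *\<^sub>R (wbar - w))"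
    by (simp add: algebra_simps)
  then have "((1 / \<gamma>) *\<^sub>R (w - wbar)) \<bullet> (z - wbar) \<le> \<xi> \<bullet> (z - wbar)" if "z \<in> Z" for z
    using svi[OF that] by (simp only: inner_diff_left)
  with \<open>\<xi> \<in> F wbar\<close> show thesis using that by blast
qed

theorem lemma6:
  fixes X :: "'a::euclidean_space set" and Y :: "'b::euclidean_space set"
    and f :: "'a \<Rightarrow> 'b \<Rightarrow> real" and \<rho> \<gamma> :: real and w wbar :: "'a \<times> 'b"
  assumes "closed X" "convex X" "closed Y" "convex Y"
    and "continuous_on (X \<times> Y) (\<lambda>(x, y). f x y)"
    and "\<rho> > 0"
    and "weakly_monotone_on (X \<times> Y) (saddle_subdiff X Y f) \<rho>"
    and "0 < \<gamma>" "\<gamma> < 1 / \<rho>"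
    and "w \<in> X \<times> Y"
    and "is_SVI_solution (prox_op (saddle_subdiff X Y f) \<gamma> w) (X \<times> Y) wbar"
  shows "saddle_subdiff X Y f wbar \<noteq> {} \<and>
         infdist 0 (saddle_subdiff X Y f wbar) \<le> norm (w - wbar) / \<gamma>"
proof -
  obtain \<xi> where "\<xi> \<in> saddle_subdiff X Y f wbar"
    and "\<And>z. z \<in> X \<times> Y \<Longrightarrow> ((1 / \<gamma>) *\<^sub>R (w - wbar)) \<bullet> (z - wbar) \<le> \<xi> \<bullet> (z - wbar)"
    using SVI_solution_prox_op_dominates_residual[OF assms(11)] by blast
  then have residual: "(1 / \<gamma>) *\<^sub>R (w - wbar) \<in> saddle_subdiff X Y f wbar"
    by (rule saddle_subdiff_dominated)
  have "infdist 0 (saddle_subdiff X Y f wbar) \<le> dist 0 ((1 / \<gamma>) *\<^sub>R (w - wbar))"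
    by (rule infdist_le[OF residual])
  also have "\<dots> = norm (w - wbar) / \<gamma>"
    using \<open>0 < \<gamma>\<close> by simp
  finally show ?thesis using residual by blast
qed

end
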